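(* Let $X$ be a manifold of dimension $n > 1$, equipped with a metric, and let $\Phi : \mathbb{R} \times X \to X$ be a $C^r$ flow with $r > 0$ which is quasi-minimal. Suppose the vector field generating $\Phi$ is bounded. Then there is a set $E \subset \mathbb{R}$ of first category (meagre) such that for every $t \in \mathbb{R} \setminus E$, the diffeomorphism $f = \Phi_t : X \to X$ is quasi-minimal (as a $\mathbb{Z}$-action), and the exceptional set of $f$ coincides with the exceptional set of the flow $\Phi$.
   Context: A dynamical system $\Phi : G \times X \to X$ of a topological group $G$ on a metric space $X$ is called quasi-minimal if the union of its dense orbits is open (an orbit of $x$ is $\Phi(G \times \{x\})$). The exceptional set of $\Phi$ is the union of its non-dense orbits. For a homeomorphism $f$, this is applied to the $\mathbb{Z}$-action $(n,x) \mapsto f^n(x)$. $\Phi_t$ denotes the time-$t$ map $x \mapsto \Phi(t,x)$. *)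

theory Defs
  imports "HOL-Analysis.Analysis"
begin

definition nowhere_dense :: "'a::topological_space set \<Rightarrow> bool" where
  "nowhere_dense S \<longleftrightarrow> interior (closure S) = {}"

definition meagre :: "'a::topological_space set \<Rightarrow> bool" where
  "meagre E \<longleftrightarrow> (\<exists>F :: nat \<Rightarrow> 'a set. (\<forall>i. nowhere_dense (F i)) \<and> E \<subseteq> (\<Union>i. F i))"

fun iter_deriv :: "'a::real_normed_vector list \<Rightarrow> ('a \<Rightarrow> 'b::real_normed_vector) \<Rightarrow> 'a \<Rightarrow> 'b" where
  "iter_deriv [] f = f"
| "iter_deriv (v # vs) f = (\<lambda>x. frechet_derivative (iter_deriv vs f) (at x) v)"

definition Cr_on :: "nat \<Rightarrow> 'a::real_normed_vector set \<Rightarrow> ('a \<Rightarrow> 'b::real_normed_vector) \<Rightarrow> bool" where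
  "Cr_on r S f \<longleftrightarrow>
     (\<forall>vs. length vs < r \<longrightarrow> (\<forall>x\<in>S. iter_deriv vs f differentiable (at x))) \<and>
     (\<forall>vs. length vs \<le> r \<longrightarrow> continuous_on S (iter_deriv vs f))"

definition is_chart :: "('a::topological_space set \<times> ('a \<Rightarrow> real^'n)) \<Rightarrow> bool" where
  "is_chart c \<longleftrightarrow> (case c of (U, \<phi>) \<Rightarrow>
     open U \<and> open (\<phi> ` U) \<and> inj_on \<phi> U \<and> continuous_on U \<phi> \<and>
     continuous_on (\<phi> ` U) (inv_into U \<phi>))"

definition Cr_atlas :: "nat \<Rightarrow> ('a::topological_space set \<times> ('a \<Rightarrow> real^'n)) set \<Rightarrow> bool" where
  "Cr_atlas r A \<longleftrightarrow>
     (\<Union>(fst ` A) = UNIV) \<and> (\<forall>c\<in>A. is_chart c) \<and>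
     (\<forall>(U, \<phi>)\<in>A. \<forall>(V, \<psi>)\<in>A. Cr_on r (\<phi> ` (U \<inter> V)) (\<psi> \<circ> inv_into U \<phi>))"

definition is_flow :: "(real \<Rightarrow> 'a::topological_space \<Rightarrow> 'a) \<Rightarrow> bool" where
  "is_flow \<Phi> \<longleftrightarrow> (\<forall>x. \<Phi> 0 x = x) \<and> (\<forall>s t x. \<Phi> (s + t) x = \<Phi> s (\<Phi> t x)) \<and>
     continuous_on UNIV (\<lambda>p. \<Phi> (fst p) (snd p))"

definition Cr_flow :: "nat \<Rightarrow> ('a::topological_space set \<times> ('a \<Rightarrow> real^'n)) set \<Rightarrow>
    (real \<Rightarrow> 'a \<Rightarrow> 'a) \<Rightarrow> bool" where
  "Cr_flow r A \<Phi> \<longleftrightarrow> is_flow \<Phi> \<and>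
     (\<forall>(U, \<phi>)\<in>A. \<forall>(V, \<psi>)\<in>A.
        Cr_on r {(t, y). y \<in> \<phi> ` U \<and> \<Phi> t (inv_into U \<phi> y) \<in> V}
              (\<lambda>(t, y). \<psi> (\<Phi> t (inv_into U \<phi> y))))"

text \<open>Boundedness of the generating vector field, expressed metrically: the speed of
  every orbit is bounded by a uniform constant C.\<close>
definition bounded_generator :: "(real \<Rightarrow> 'a::metric_space \<Rightarrow> 'a) \<Rightarrow> bool" where
  "bounded_generator \<Phi> \<longleftrightarrow> (\<exists>C. \<forall>t x. dist (\<Phi> t x) x \<le> C * \<bar>t\<bar>)"

definition flow_orbit :: "(real \<Rightarrow> 'a \<Rightarrow> 'a) \<Rightarrow> 'a \<Rightarrow> 'a set" where
  "flow_orbit \<Phi> x = (\<lambda>t. \<Phi> t x) ` UNIV"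

definition zpow :: "('a \<Rightarrow> 'a) \<Rightarrow> int \<Rightarrow> 'a \<Rightarrow> 'a" where
  "zpow f n = (if 0 \<le> n then f ^^ nat n else inv f ^^ nat (- n))"

definition z_orbit :: "('a \<Rightarrow> 'a) \<Rightarrow> 'a \<Rightarrow> 'a set" where
  "z_orbit f x = (\<lambda>n. zpow f n x) ` UNIV"

definition dense_set :: "'a::topological_space set \<Rightarrow> bool" where
  "dense_set S \<longleftrightarrow> closure S = UNIV"

definition flow_quasi_minimal :: "(real \<Rightarrow> 'a::topological_space \<Rightarrow> 'a) \<Rightarrow> bool" where
  "flow_quasi_minimal \<Phi> \<longleftrightarrow> open (\<Union>{flow_orbit \<Phi> x | x. dense_set (flow_orbit \<Phi> x)})"

definition flow_exceptional_set :: "(real \<Rightarrow> 'a::topological_space \<Rightarrow> 'a) \<Rightarrow> 'a set" where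
  "flow_exceptional_set \<Phi> = \<Union>{flow_orbit \<Phi> x | x. \<not> dense_set (flow_orbit \<Phi> x)}"

definition homeo_quasi_minimal :: "('a::topological_space \<Rightarrow> 'a) \<Rightarrow> bool" where
  "homeo_quasi_minimal f \<longleftrightarrow> open (\<Union>{z_orbit f x | x. dense_set (z_orbit f x)})"

definition homeo_exceptional_set :: "('a::topological_space \<Rightarrow> 'a) \<Rightarrow> 'a set" where
  "homeo_exceptional_set f = \<Union>{z_orbit f x | x. \<not> dense_set (z_orbit f x)}"

end

theory Submission
  imports Defs
begin

(* A point c with dense orbit is recurrent: if its returns to a ball around c were bounded in
   time, the ball would lie in a compact arc of the orbit and hence embed into the real line,
   which invariance of dimension forbids when n > 1. For an unbounded set S of return times,
   every t outside a nowhere dense set has the property that finitely many elements of S,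
   translated by multiples of t, come within \<delta> of every real number. As the bounded generator
   makes the flow Lipschitz in time, for such t the \<Phi>_t-orbit of every point with dense flow
   orbit passes close to c. Letting c range over a countable set of points with dense orbit that
   is dense among them, and the radii over 1/k, gives a meagre set of bad times; for t outside it
   the dense \<Phi>_t-orbits are exactly the dense flow orbits, which gives both claims. *)

section \<open>Lattice translates of unbounded sets of reals\<close>

definition net_steps :: "real set \<Rightarrow> real \<Rightarrow> real set" where
  "net_steps S \<delta> =
     {t. \<exists>F. finite F \<and> F \<subseteq> S \<and> (\<forall>u. \<exists>r\<in>F. \<exists>m::int. \<bar>u + of_int m * t - r\<bar> < \<delta>)}"

lemma unbounded_real_exceeds:
  fixes S :: "real set"
  assumes "\<not> bounded S"
  obtains r where "r \<in> S" "R < \<bar>r\<bar>"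
  using assms unfolding bounded_real by (meson not_le)

lemma quotient_in_interval:
  fixes \<alpha> \<beta> q :: real
  assumes "0 < \<alpha>" "\<alpha> < \<beta>" "\<alpha> * \<beta> / (\<beta> - \<alpha>) < q"
  obtains n :: nat where "n > 0" "\<alpha> < q / n" "q / n \<le> \<beta>"
proof -
  have "0 < \<alpha> * \<beta> / (\<beta> - \<alpha>)" using assms(1,2) by simp
  then have "0 < q" using assms(3) by linarith
  then have "0 < q / \<beta>" using assms(1,2) by simp
  have "\<alpha> * \<beta> < q * (\<beta> - \<alpha>)" using assms by (simp add: pos_divide_less_eq)
  then have key: "\<alpha> * (q + \<beta>) < q * \<beta>" by (simp add: algebra_simps)
  define n where "n = nat \<lceil>q / \<beta>\<rceil>"
  have n_eq: "real n = of_int \<lceil>q / \<beta>\<rceil>" unfolding n_def using \<open>0 < q / \<beta>\<close> by simp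
  have n1: "q / \<beta> \<le> real n" and n2: "real n < q / \<beta> + 1"
    unfolding n_eq by linarith+
  have "real n > 0" using n1 \<open>0 < q / \<beta>\<close> by linarith
  have "real n * \<alpha> < (q / \<beta> + 1) * \<alpha>" using n2 assms(1) by simp
  also have "\<dots> = \<alpha> * (q + \<beta>) / \<beta>" using assms by (simp add: field_simps)
  also have "\<dots> < q" using key assms by (simp add: divide_less_eq)
  finally have "\<alpha> < q / n" using \<open>real n > 0\<close> by (simp add: field_simps)
  moreover have "q / n \<le> \<beta>" using n1 \<open>real n > 0\<close> assms by (simp add: field_simps)
  moreover have "n > 0" using \<open>real n > 0\<close> by simp
  ultimately show ?thesis using that by blast
qed

lemma unbounded_approx_integer_multiple:
  fixes \<alpha> \<beta> \<epsilon> p :: real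
  assumes "0 < \<alpha>" "\<alpha> < \<beta>" "\<epsilon> > 0" "\<not> bounded S"
  shows "\<exists>r\<in>S. \<exists>k::int. \<exists>\<alpha>' \<beta>'. \<alpha> \<le> \<alpha>' \<and> \<alpha>' < \<beta>' \<and> \<beta>' \<le> \<beta> \<and>
           (\<forall>t\<in>{\<alpha>'..\<beta>'}. \<bar>r - of_int k * t - p\<bar> < \<epsilon>)"
proof -
  obtain r where "r \<in> S" and r: "\<bar>p\<bar> + \<alpha> * \<beta> / (\<beta> - \<alpha>) < \<bar>r\<bar>"
    using unbounded_real_exceeds[OF assms(4)] .
  define q where "q = \<bar>r - p\<bar>"
  have "\<alpha> * \<beta> / (\<beta> - \<alpha>) < q" using r unfolding q_def by linarith
  then obtain n :: nat where n: "n > 0" "\<alpha> < q / n" "q / n \<le> \<beta>"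
    using quotient_in_interval assms(1,2) by blast
  define \<alpha>' where "\<alpha>' = max \<alpha> (q / n - \<epsilon> / (2 * n))"
  define k :: int where "k = (if p \<le> r then n else - n)"
  text \<open>On [\<alpha>', q/n] we have r - k t - p = \<plusminus>n (q/n - t), which is less than \<epsilon>.\<close>
  have "\<bar>r - of_int k * t - p\<bar> < \<epsilon>" if "t \<in> {\<alpha>'..q / n}" for t
  proof -
    have "\<bar>r - of_int k * t - p\<bar> = real n * (q / n - t)"
      using that n(1) unfolding k_def q_def by (auto simp: abs_if field_simps)
    also have "\<dots> \<le> \<epsilon> / 2"
    proof -
      have "q / n - \<epsilon> / (2 * n) \<le> t" using that unfolding \<alpha>'_def by simp
      then have "q - \<epsilon> / 2 \<le> n * t" using n(1) by (simp add: field_simps)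
      then show ?thesis using n(1) by (simp add: right_diff_distrib)
    qed
    finally show ?thesis using assms(3) by linarith
  qed
  moreover have "\<alpha> \<le> \<alpha>'" "\<alpha>' < q / n" unfolding \<alpha>'_def using n assms(3) by auto
  ultimately show ?thesis using \<open>r \<in> S\<close> n(3) by blast
qed

lemma unbounded_approx_integer_multiples:
  fixes \<alpha> \<beta> \<epsilon> :: real
  assumes "0 < \<alpha>" "\<alpha> < \<beta>" "\<epsilon> > 0" "\<not> bounded S" "finite P"
  shows "\<exists>\<alpha>' \<beta>' F. \<alpha> \<le> \<alpha>' \<and> \<alpha>' < \<beta>' \<and> \<beta>' \<le> \<beta> \<and> finite F \<and> F \<subseteq> S \<and>
     (\<forall>p\<in>P. \<forall>t\<in>{\<alpha>'..\<beta>'}. \<exists>r\<in>F. \<exists>k::int. \<bar>r - of_int k * t - p\<bar> < \<epsilon>)"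
  using \<open>finite P\<close>
proof induction
  case empty
  show ?case using assms(2) by blast
next
  case (insert p P)
  then obtain \<alpha>1 \<beta>1 F where H: "\<alpha> \<le> \<alpha>1" "\<alpha>1 < \<beta>1" "\<beta>1 \<le> \<beta>" "finite F" "F \<subseteq> S"
     "\<forall>p\<in>P. \<forall>t\<in>{\<alpha>1..\<beta>1}. \<exists>r\<in>F. \<exists>k::int. \<bar>r - of_int k * t - p\<bar> < \<epsilon>"
    by blast
  obtain r k \<alpha>' \<beta>' where R: "r \<in> S" "\<alpha>1 \<le> \<alpha>'" "\<alpha>' < \<beta>'" "\<beta>' \<le> \<beta>1"
    "\<forall>t\<in>{\<alpha>'..\<beta>'}. \<bar>r - of_int k * t - p\<bar> < \<epsilon>"
    using unbounded_approx_integer_multiple[of \<alpha>1 \<beta>1 \<epsilon> S p] H(1,2) assms by auto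
  have "\<forall>q\<in>insert p P. \<forall>t\<in>{\<alpha>'..\<beta>'}. \<exists>r'\<in>insert r F. \<exists>k::int. \<bar>r' - of_int k * t - q\<bar> < \<epsilon>"
    using H(6) R(2,4,5) by fastforce
  moreover have "\<alpha> \<le> \<alpha>'" "\<beta>' \<le> \<beta>" using H R by linarith+
  ultimately show ?case using R(1,3) H(4,5) by blast
qed

lemma net_step_if_grid_approximated:
  fixes t \<delta> :: real
  assumes "0 < t" "\<delta> > 0" "t \<le> real K * \<delta> / 2" "finite F" "F \<subseteq> S"
    and grid: "\<And>i. i < K \<Longrightarrow> \<exists>r\<in>F. \<exists>k::int. \<bar>r - of_int k * t - real i * \<delta> / 2\<bar> < \<delta> / 2"
  shows "t \<in> net_steps S \<delta>"
  unfolding net_steps_def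
proof (intro CollectI exI[of _ F] conjI allI)
  fix u
  define v where "v = u - of_int \<lfloor>u / t\<rfloor> * t"
  have v0: "v \<ge> 0" unfolding v_def using floor_divide_lower[OF assms(1), of u] by simp
  have v1: "v < t"
    unfolding v_def using floor_divide_upper[OF assms(1), of u] by (simp add: algebra_simps)
  have hpos: "\<delta> / 2 > 0" using assms(2) by simp
  define i where "i = nat \<lfloor>v / (\<delta> / 2)\<rfloor>"
  have ri: "real i = of_int \<lfloor>v / (\<delta> / 2)\<rfloor>" unfolding i_def using v0 hpos by simp
  have i1: "real i * (\<delta> / 2) \<le> v" unfolding ri by (rule floor_divide_lower[OF hpos])
  have i2: "v < (real i + 1) * (\<delta> / 2)" unfolding ri by (rule floor_divide_upper[OF hpos])
  have "real i * (\<delta> / 2) < real K * (\<delta> / 2)" using i1 v1 assms(3) by linarith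
  then have "i < K" using hpos by simp
  then obtain r k where rk: "r \<in> F" "\<bar>r - of_int k * t - real i * \<delta> / 2\<bar> < \<delta> / 2"
    using grid by blast
  have "\<bar>u + of_int (k - \<lfloor>u / t\<rfloor>) * t - r\<bar>
      = \<bar>(v - real i * \<delta> / 2) - (r - of_int k * t - real i * \<delta> / 2)\<bar>"
    unfolding v_def by (simp add: algebra_simps)
  also have "\<dots> \<le> \<bar>v - real i * \<delta> / 2\<bar> + \<bar>r - of_int k * t - real i * \<delta> / 2\<bar>"
    by (rule abs_triangle_ineq4)
  also have "\<dots> < \<delta>" using i1 i2 rk(2) by (simp add: abs_if algebra_simps)
  finally show "\<exists>r\<in>F. \<exists>m::int. \<bar>u + of_int m * t - r\<bar> < \<delta>" using rk(1) by blast
qed (use assms in auto)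

lemma net_steps_subinterval_pos:
  fixes \<alpha> \<beta> \<delta> :: real
  assumes "0 < \<alpha>" "\<alpha> < \<beta>" "\<delta> > 0" "\<not> bounded S"
  shows "\<exists>\<alpha>' \<beta>'. \<alpha> \<le> \<alpha>' \<and> \<alpha>' < \<beta>' \<and> \<beta>' \<le> \<beta> \<and> {\<alpha>'..\<beta>'} \<subseteq> net_steps S \<delta>"
proof -
  define K where "K = nat \<lceil>2 * \<beta> / \<delta>\<rceil>"
  have "2 * \<beta> / \<delta> \<le> real K" unfolding K_def by linarith
  then have K: "\<beta> \<le> real K * \<delta> / 2" using assms(3) by (simp add: field_simps)
  obtain \<alpha>' \<beta>' F where H: "\<alpha> \<le> \<alpha>'" "\<alpha>' < \<beta>'" "\<beta>' \<le> \<beta>" "finite F" "F \<subseteq> S"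
     "\<forall>p\<in>(\<lambda>i. real i * \<delta> / 2) ` {..<K}. \<forall>t\<in>{\<alpha>'..\<beta>'}.
        \<exists>r\<in>F. \<exists>k::int. \<bar>r - of_int k * t - p\<bar> < \<delta> / 2"
    using unbounded_approx_integer_multiples[of \<alpha> \<beta> "\<delta> / 2" S "(\<lambda>i. real i * \<delta> / 2) ` {..<K}"]
      assms by auto
  have "{\<alpha>'..\<beta>'} \<subseteq> net_steps S \<delta>"
  proof
    fix t assume "t \<in> {\<alpha>'..\<beta>'}"
    then show "t \<in> net_steps S \<delta>"
      using H assms K by (intro net_step_if_grid_approximated[of t \<delta> K F]) auto
  qed
  then show ?thesis using H(1-3) by blast
qed

lemma net_steps_uminus:
  assumes "t \<in> net_steps S \<delta>"
  shows "-t \<in> net_steps S \<delta>"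
proof -
  obtain F where F: "finite F" "F \<subseteq> S" "\<forall>u. \<exists>r\<in>F. \<exists>m::int. \<bar>u + of_int m * t - r\<bar> < \<delta>"
    using assms unfolding net_steps_def by blast
  have "\<exists>r\<in>F. \<exists>m::int. \<bar>u + of_int m * (-t) - r\<bar> < \<delta>" for u
    using F(3) by (metis minus_mult_minus of_int_minus)
  then show ?thesis using F(1,2) unfolding net_steps_def by blast
qed

lemma net_steps_subinterval:
  fixes a b \<delta> :: real
  assumes "a < b" "\<delta> > 0" "\<not> bounded S"
  shows "\<exists>a' b'. a \<le> a' \<and> a' < b' \<and> b' \<le> b \<and> {a'..b'} \<subseteq> net_steps S \<delta>"
proof (cases "b > 0")
  case True
  have "0 < max a (b/2)" "max a (b/2) < b" using True assms by auto
  then obtain a' b' where "max a (b/2) \<le> a'" "a' < b'" "b' \<le> b" "{a'..b'} \<subseteq> net_steps S \<delta>"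
    using net_steps_subinterval_pos assms(2,3) by blast
  then show ?thesis by (intro exI[of _ a'] exI[of _ b']) auto
next
  case False
  have "0 < -(a+b)/2" "-(a+b)/2 < -a" using False assms by auto
  then obtain a' b' where H: "-(a+b)/2 \<le> a'" "a' < b'" "b' \<le> -a" "{a'..b'} \<subseteq> net_steps S \<delta>"
    using net_steps_subinterval_pos assms(2,3) by blast
  have "{-b'..-a'} \<subseteq> net_steps S \<delta>"
  proof
    fix t assume "t \<in> {-b'..-a'}"
    then have "-t \<in> net_steps S \<delta>" using H(4) by auto
    then show "t \<in> net_steps S \<delta>" using net_steps_uminus by fastforce
  qed
  moreover have "a \<le> -b'" "-b' < -a'" using H(2,3) by linarith+
  moreover have "-a' \<le> b" using H(1) assms(1) by (simp add: field_simps)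
  ultimately show ?thesis by blast
qed

lemma nowhere_dense_if_intervals_inside:
  fixes G :: "real set"
  assumes "\<And>a b. a < b \<Longrightarrow> \<exists>a' b'. a \<le> a' \<and> a' < b' \<and> b' \<le> b \<and> {a'..b'} \<subseteq> G"
  shows "nowhere_dense (- G)"
  unfolding nowhere_dense_def
proof (rule ccontr)
  assume "interior (closure (- G)) \<noteq> {}"
  then obtain y e where "e > 0" "ball y e \<subseteq> closure (- G)"
    using mem_interior by blast
  moreover obtain a' b' where "y - e \<le> a'" "a' < b'" "b' \<le> y + e" "{a'..b'} \<subseteq> G"
    using assms[of "y - e" "y + e"] \<open>e > 0\<close> by auto
  ultimately have "{a'<..<b'} \<subseteq> closure (- G)"
    by (auto simp: ball_eq_greaterThanLessThan)
  moreover have "{a'<..<b'} \<inter> closure (- G) = {}"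
  proof -
    have "{a'<..<b'} \<subseteq> G" using \<open>{a'..b'} \<subseteq> G\<close> by auto
    then show ?thesis by (simp add: open_Int_closure_eq_empty) blast
  qed
  moreover have "(a' + b') / 2 \<in> {a'<..<b'}" using \<open>a' < b'\<close> by simp
  ultimately show False by blast
qed

lemma nowhere_dense_compl_net_steps:
  assumes "\<delta> > 0" "\<not> bounded S"
  shows "nowhere_dense (- net_steps S \<delta>)"
  using net_steps_subinterval[OF _ assms] by (rule nowhere_dense_if_intervals_inside)

lemma meagre_countable_Union:
  fixes \<F> :: "'a::topological_space set set"
  assumes "countable \<F>" "\<And>S. S \<in> \<F> \<Longrightarrow> nowhere_dense S"
  shows "meagre (\<Union>\<F>)"
proof (cases "\<F> = {}")
  case True
  show ?thesis unfolding meagre_def True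
    by (intro exI[of _ "\<lambda>_. {}"]) (simp add: nowhere_dense_def)
next
  case False
  then have "range (from_nat_into \<F>) = \<F>"
    using assms(1) by (rule range_from_nat_into)
  then show ?thesis
    unfolding meagre_def using assms(2) by (intro exI[of _ "from_nat_into \<F>"]) auto
qed

lemma flow_zero: "is_flow \<Phi> \<Longrightarrow> \<Phi> 0 x = x"
  unfolding is_flow_def by blast

lemma flow_add: "is_flow \<Phi> \<Longrightarrow> \<Phi> (s + t) x = \<Phi> s (\<Phi> t x)"
  unfolding is_flow_def by blast

lemma flow_uminus_cancel: "is_flow \<Phi> \<Longrightarrow> \<Phi> (-s) (\<Phi> s x) = x"
  using flow_add[of \<Phi> "-s" s x] flow_zero[of \<Phi> x] by simp

lemma continuous_on_flow_map:
  assumes "is_flow \<Phi>"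
  shows "continuous_on UNIV (\<Phi> t)"
proof -
  have flow: "continuous_on UNIV (\<lambda>p. \<Phi> (fst p) (snd p))"
    using assms unfolding is_flow_def by blast
  have "continuous_on UNIV (\<lambda>x. (\<lambda>p. \<Phi> (fst p) (snd p)) (t, x))"
    by (rule continuous_on_compose2[OF flow]) (auto intro: continuous_intros)
  then show ?thesis by simp
qed

lemma continuous_on_flow_time:
  assumes "is_flow \<Phi>"
  shows "continuous_on UNIV (\<lambda>s. \<Phi> s x)"
proof -
  have flow: "continuous_on UNIV (\<lambda>p. \<Phi> (fst p) (snd p))"
    using assms unfolding is_flow_def by blast
  have "continuous_on UNIV (\<lambda>s. (\<lambda>p. \<Phi> (fst p) (snd p)) (s, x))"
    by (rule continuous_on_compose2[OF flow]) (auto intro: continuous_intros)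
  then show ?thesis by simp
qed

lemma flow_inv:
  assumes "is_flow \<Phi>"
  shows "inv_into UNIV (\<Phi> t) = \<Phi> (-t)"
proof -
  have "\<Phi> t (\<Phi> (-t) x) = x" for x
    using flow_uminus_cancel[OF assms, of "-t" x] by simp
  then show ?thesis
    using flow_uminus_cancel[OF assms] by (intro inv_equality) auto
qed

lemma flow_funpow: "is_flow \<Phi> \<Longrightarrow> (\<Phi> t ^^ n) x = \<Phi> (real n * t) x"
  by (induction n) (simp_all add: flow_zero flow_add[symmetric] algebra_simps)

lemma flow_zpow: "is_flow \<Phi> \<Longrightarrow> zpow (\<Phi> t) m x = \<Phi> (of_int m * t) x"
  by (cases "0 \<le> m") (simp_all add: zpow_def flow_funpow flow_inv)

lemma flow_orbit_self: "is_flow \<Phi> \<Longrightarrow> x \<in> flow_orbit \<Phi> x"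
  unfolding flow_orbit_def by (rule range_eqI[where x=0]) (simp add: flow_zero)

lemma flow_orbit_eq:
  assumes "is_flow \<Phi>" "y \<in> flow_orbit \<Phi> x"
  shows "flow_orbit \<Phi> y = flow_orbit \<Phi> x"
proof -
  obtain s where s: "y = \<Phi> s x" using assms(2) unfolding flow_orbit_def by blast
  have "flow_orbit \<Phi> y = range (\<lambda>t. \<Phi> (t + s) x)"
    unfolding flow_orbit_def s using flow_add[OF assms(1)] by simp
  also have "\<dots> = (\<lambda>t. \<Phi> t x) ` range (\<lambda>t. t + s)"
    by (simp only: image_image)
  also have "range (\<lambda>t. t + s) = UNIV"
    by (metis diff_add_cancel surj_def)
  finally show ?thesis unfolding flow_orbit_def .
qed

lemma z_orbit_self: "x \<in> z_orbit f x"
  unfolding z_orbit_def by (rule range_eqI[where x=0]) (simp add: zpow_def)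

lemma z_orbit_subset_flow_orbit: "is_flow \<Phi> \<Longrightarrow> z_orbit (\<Phi> t) x \<subseteq> flow_orbit \<Phi> x"
  unfolding z_orbit_def flow_orbit_def by (auto simp: flow_zpow)

lemma dense_set_mono: "dense_set A \<Longrightarrow> A \<subseteq> B \<Longrightarrow> dense_set B"
  unfolding dense_set_def using closure_mono[of A B] by auto

lemma bounded_generator_time_lipschitz:
  assumes "is_flow \<Phi>" "bounded_generator \<Phi>"
  obtains C where "C > 0" "\<And>a b x. dist (\<Phi> a x) (\<Phi> b x) \<le> C * \<bar>a - b\<bar>"
proof -
  obtain C0 where C0: "\<And>t x. dist (\<Phi> t x) x \<le> C0 * \<bar>t\<bar>"
    using assms(2) unfolding bounded_generator_def by blast
  have "dist (\<Phi> a x) (\<Phi> b x) \<le> max C0 1 * \<bar>a - b\<bar>" for a b x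
  proof -
    have "dist (\<Phi> a x) (\<Phi> b x) \<le> C0 * \<bar>a - b\<bar>"
      using C0[of "a - b" "\<Phi> b x"] flow_add[OF assms(1), of "a - b" b x] by simp
    also have "\<dots> \<le> max C0 1 * \<bar>a - b\<bar>" by (intro mult_right_mono) auto
    finally show ?thesis .
  qed
  then show ?thesis using that[of "max C0 1"] by simp
qed

section \<open>Recurrence of dense orbits on manifolds\<close>

definition recurrent :: "(real \<Rightarrow> 'a::metric_space \<Rightarrow> 'a) \<Rightarrow> 'a \<Rightarrow> bool" where
  "recurrent \<Phi> c \<longleftrightarrow> (\<forall>\<epsilon>>0. \<not> bounded {s. dist (\<Phi> s c) c < \<epsilon>})"

lemma chart_domain_not_injective_into_real:
  fixes \<phi> :: "'a::topological_space \<Rightarrow> real^'n" and g :: "'a \<Rightarrow> real"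
  assumes "CARD('n) > 1" "is_chart (U, \<phi>)" "open W" "W \<subseteq> U" "W \<noteq> {}" "continuous_on W g"
  shows "\<not> inj_on g W"
proof
  assume inj: "inj_on g W"
  have ch: "open (\<phi> ` U)" "inj_on \<phi> U" "continuous_on (\<phi> ` U) (inv_into U \<phi>)"
    using assms(2) unfolding is_chart_def by auto
  have "\<phi> ` W = inv_into U \<phi> -` W \<inter> \<phi> ` U"
    using assms(4) ch(2) by (auto simp: image_iff)
  then have "open (\<phi> ` W)"
    using continuous_on_open_vimage[OF ch(1)] ch(3) assms(3) by metis
  moreover have "continuous_on (\<phi> ` W) (g \<circ> inv_into U \<phi>)"
    using assms(4,6) ch(2) continuous_on_subset[OF ch(3), of "\<phi> ` W"]
    by (intro continuous_on_compose) auto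
  moreover have "inj_on (g \<circ> inv_into U \<phi>) (\<phi> ` W)"
    using assms(4) ch(2) inj by (intro comp_inj_on inj_on_inv_into) auto
  ultimately have "DIM(real^'n) \<le> DIM(real)"
    using assms(5) by (intro invariance_of_dimension) auto
  then show False using assms(1) by simp
qed

lemma periodic_point_returns_unbounded:
  assumes "is_flow \<Phi>" "p \<noteq> 0" "\<Phi> p c = c"
  shows "\<not> bounded {s. \<Phi> s c = c}"
proof
  assume "bounded {s. \<Phi> s c = c}"
  then obtain R where R: "\<And>s. \<Phi> s c = c \<Longrightarrow> \<bar>s\<bar> \<le> R"
    unfolding bounded_real by blast
  obtain k :: nat where "R / \<bar>p\<bar> < real k" using reals_Archimedean2 by blast
  then have "R < \<bar>real k * p\<bar>" using assms(2) by (simp add: field_simps abs_mult)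
  moreover have "(\<Phi> p ^^ k) c = c" by (induction k) (simp_all add: assms(3))
  then have "\<Phi> (real k * p) c = c" using flow_funpow[OF assms(1)] by metis
  ultimately show False using R by fastforce
qed

lemma inj_flow_orbit_map:
  assumes "is_flow \<Phi>" "\<And>p. \<Phi> p c = c \<Longrightarrow> p = 0"
  shows "inj (\<lambda>s. \<Phi> s c)"
proof (rule injI)
  fix a b assume "\<Phi> a c = \<Phi> b c"
  then have "\<Phi> (a - b) c = \<Phi> (-b) (\<Phi> b c)"
    using flow_add[OF assms(1), of "-b" a c] by simp
  then show "a = b"
    using assms(2)[of "a - b"] flow_uminus_cancel[OF assms(1)] by simp
qed

lemma dense_orbit_neighbourhood_in_segment:
  assumes "is_flow \<Phi>" "dense_set (flow_orbit \<Phi> c)"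
    and returns: "\<And>s. dist (\<Phi> s c) c < \<epsilon> \<Longrightarrow> \<bar>s\<bar> \<le> R"
  shows "ball c \<epsilon> \<subseteq> (\<lambda>s. \<Phi> s c) ` {-R..R}"
proof -
  have "compact ((\<lambda>s. \<Phi> s c) ` {-R..R})"
    using continuous_on_flow_time[OF assms(1)]
    by (intro compact_continuous_image) (auto intro: continuous_on_subset)
  then have closed: "closed ((\<lambda>s. \<Phi> s c) ` {-R..R})" by (rule compact_imp_closed)
  have "ball c \<epsilon> \<inter> flow_orbit \<Phi> c \<subseteq> (\<lambda>s. \<Phi> s c) ` {-R..R}"
    using returns unfolding flow_orbit_def by (force simp: dist_commute abs_le_iff)
  then have "closure (ball c \<epsilon> \<inter> flow_orbit \<Phi> c) \<subseteq> (\<lambda>s. \<Phi> s c) ` {-R..R}"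
    using closed by (rule closure_minimal)
  moreover have "ball c \<epsilon> \<subseteq> closure (ball c \<epsilon> \<inter> flow_orbit \<Phi> c)"
    using open_Int_closure_subset[of "ball c \<epsilon>" "flow_orbit \<Phi> c"] assms(2)
    unfolding dense_set_def by simp
  ultimately show ?thesis by blast
qed

text \<open>If the return times to a ball around c were bounded, then by density that ball would
  lie in a compact arc of the orbit and would thus embed into the real line.\<close>
lemma dense_orbit_recurrent:
  assumes "is_flow \<Phi>" "dense_set (flow_orbit \<Phi> c)"
    and not_arc: "\<And>W (g :: 'a::metric_space \<Rightarrow> real).
      open W \<Longrightarrow> c \<in> W \<Longrightarrow> continuous_on W g \<Longrightarrow> \<not> inj_on g W"
  shows "recurrent \<Phi> c"
  unfolding recurrent_def
proof (intro allI impI notI)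
  fix \<epsilon> :: real
  assume "\<epsilon> > 0" and "bounded {s. dist (\<Phi> s c) c < \<epsilon>}"
  then obtain R where R: "\<And>s. dist (\<Phi> s c) c < \<epsilon> \<Longrightarrow> \<bar>s\<bar> \<le> R"
    unfolding bounded_real by blast
  have aperiodic: "p = 0" if "\<Phi> p c = c" for p
  proof (rule ccontr)
    assume "p \<noteq> 0"
    then have "\<not> bounded {s. \<Phi> s c = c}"
      using periodic_point_returns_unbounded[OF assms(1)] that by blast
    moreover have "{s. \<Phi> s c = c} \<subseteq> {-R..R}"
    proof
      fix s assume "s \<in> {s. \<Phi> s c = c}"
      then show "s \<in> {-R..R}" using R[of s] \<open>\<epsilon> > 0\<close> by (simp add: abs_le_iff)
    qed
    ultimately show False using bounded_subset[OF bounded_closed_interval] by blast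
  qed
  obtain g where g: "homeomorphism {-R..R} ((\<lambda>s. \<Phi> s c) ` {-R..R}) (\<lambda>s. \<Phi> s c) g"
    using homeomorphism_compact[OF compact_Icc _ refl]
      continuous_on_subset[OF continuous_on_flow_time[OF assms(1)]]
      inj_on_subset[OF inj_flow_orbit_map[OF assms(1) aperiodic]] by blast
  have ball: "ball c \<epsilon> \<subseteq> (\<lambda>s. \<Phi> s c) ` {-R..R}"
    using dense_orbit_neighbourhood_in_segment[OF assms(1,2) R] .
  have "continuous_on (ball c \<epsilon>) g" "inj_on g (ball c \<epsilon>)"
    using g ball unfolding homeomorphism_def
    by (auto intro: continuous_on_subset inj_on_subset inj_on_inverseI[of _ "\<lambda>s. \<Phi> s c"])
  then show False using not_arc[of "ball c \<epsilon>" g] \<open>\<epsilon> > 0\<close> by simp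
qed

lemma manifold_dense_orbit_recurrent:
  fixes A :: "('a::metric_space set \<times> ('a \<Rightarrow> real^'n)) set" and \<Phi> :: "real \<Rightarrow> 'a \<Rightarrow> 'a"
  assumes "CARD('n) > 1" "Cr_atlas r A" "is_flow \<Phi>" "dense_set (flow_orbit \<Phi> c)"
  shows "recurrent \<Phi> c"
proof (rule dense_orbit_recurrent[OF assms(3,4)])
  fix W :: "'a set" and g :: "'a \<Rightarrow> real"
  assume W: "open W" "c \<in> W" and g: "continuous_on W g"
  have "c \<in> \<Union>(fst ` A)" using assms(2) unfolding Cr_atlas_def by simp
  then obtain U \<phi> where U: "(U, \<phi>) \<in> A" "c \<in> U" by force
  then have chart: "is_chart (U, \<phi>)" using assms(2) unfolding Cr_atlas_def by blast
  then have "open (W \<inter> U)" using W(1) unfolding is_chart_def by auto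
  then have "\<not> inj_on g (W \<inter> U)"
    using chart_domain_not_injective_into_real[OF assms(1) chart] W(2) U(2)
      continuous_on_subset[OF g] by blast
  then show "\<not> inj_on g W" using inj_on_subset by blast
qed

section \<open>Time-t maps off a meagre set of times\<close>

text \<open>The finitely many return times in F, shifted by multiples of t, come within
  \<rho>/(8C) of every time, in particular of the time at which the orbit of x passes
  close enough to c that each \<Phi> r with r \<in> F moves it within \<rho>/4 of \<Phi> r c.\<close>
lemma net_step_orbit_approaches:
  fixes \<Phi> :: "real \<Rightarrow> 'a::metric_space \<Rightarrow> 'a"
  assumes "is_flow \<Phi>" "C > 0"
    and lip: "\<And>a b z. dist (\<Phi> a z) (\<Phi> b z) \<le> C * \<bar>a - b\<bar>"
    and "dense_set (flow_orbit \<Phi> x)" "\<rho> > 0"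
    and "t \<in> net_steps {s. dist (\<Phi> s c) c < \<rho>/4} (\<rho>/(8*C))"
  shows "\<exists>m::int. dist (\<Phi> (of_int m * t) x) c < \<rho>"
proof -
  obtain F where F: "finite F" "F \<subseteq> {s. dist (\<Phi> s c) c < \<rho>/4}"
    "\<forall>u. \<exists>r\<in>F. \<exists>m::int. \<bar>u + of_int m * t - r\<bar> < \<rho>/(8*C)"
    using assms(6) unfolding net_steps_def by blast
  define N where "N = (\<Inter>r\<in>F. \<Phi> r -` ball (\<Phi> r c) (\<rho>/4))"
  have "open N"
    unfolding N_def using F(1) continuous_on_flow_map[OF assms(1)]
    by (intro open_INT ballI open_vimage) auto
  moreover have "c \<in> N" unfolding N_def using assms(5) by simp
  ultimately have "N \<inter> flow_orbit \<Phi> x \<noteq> {}"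
    using open_Int_closure_eq_empty[of N] assms(4) unfolding dense_set_def by blast
  then obtain u where u: "\<Phi> u x \<in> N" unfolding flow_orbit_def by blast
  obtain r m where rm: "r \<in> F" "\<bar>- u + of_int m * t - r\<bar> < \<rho>/(8*C)" using F(3) by blast
  define \<tau> where "\<tau> = of_int m * t - u"
  have orbit: "\<Phi> (of_int m * t) x = \<Phi> \<tau> (\<Phi> u x)"
    unfolding \<tau>_def using flow_add[OF assms(1), of "of_int m * t - u" u x] by simp
  have "dist (\<Phi> \<tau> (\<Phi> u x)) (\<Phi> r (\<Phi> u x)) \<le> C * \<bar>\<tau> - r\<bar>" by (rule lip)
  also have "\<dots> \<le> C * (\<rho>/(8*C))"
    using rm(2) assms(2) unfolding \<tau>_def by (intro mult_left_mono) auto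
  also have "\<dots> = \<rho>/8" using assms(2) by simp
  finally have d1: "dist (\<Phi> \<tau> (\<Phi> u x)) (\<Phi> r (\<Phi> u x)) \<le> \<rho>/8" .
  have d2: "dist (\<Phi> r (\<Phi> u x)) (\<Phi> r c) < \<rho>/4"
    using u rm(1) unfolding N_def by (simp add: dist_commute)
  have d3: "dist (\<Phi> r c) c < \<rho>/4" using F(2) rm(1) by auto
  have "dist (\<Phi> \<tau> (\<Phi> u x)) c < \<rho>"
    using d1 d2 d3 dist_triangle[of "\<Phi> \<tau> (\<Phi> u x)" c "\<Phi> r (\<Phi> u x)"]
      dist_triangle[of "\<Phi> r (\<Phi> u x)" c "\<Phi> r c"] assms(5) by linarith
  then show ?thesis using orbit by (intro exI[of _ m]) simp
qed

lemma separable_subset: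
  fixes D :: "'a::second_countable_topology set"
  obtains Q where "countable Q" "Q \<subseteq> D" "\<And>W. open W \<Longrightarrow> W \<inter> D \<noteq> {} \<Longrightarrow> Q \<inter> W \<noteq> {}"
proof -
  obtain \<B> :: "'a set set" where B: "countable \<B>" "\<And>S. open S \<Longrightarrow> \<exists>U. U \<subseteq> \<B> \<and> S = \<Union>U"
    by (meson univ_second_countable)
  define Q where "Q = (\<lambda>B. SOME x. x \<in> B \<inter> D) ` {B \<in> \<B>. B \<inter> D \<noteq> {}}"
  have pick: "(SOME x. x \<in> B \<inter> D) \<in> B \<inter> D" if "B \<inter> D \<noteq> {}" for B
    using that some_in_eq by blast
  show ?thesis
  proof (rule that)
    show "countable Q"
      unfolding Q_def by (intro countable_image countable_subset[OF _ B(1)]) auto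
    show "Q \<subseteq> D" unfolding Q_def using pick by auto
    fix W assume "open W" "W \<inter> D \<noteq> {}"
    then obtain U x where "U \<subseteq> \<B>" "W = \<Union>U" "x \<in> W" "x \<in> D" using B(2) by blast
    then obtain B where B: "B \<in> \<B>" "B \<subseteq> W" "B \<inter> D \<noteq> {}" by blast
    then have "(SOME x. x \<in> B \<inter> D) \<in> Q" unfolding Q_def by blast
    moreover have "(SOME x. x \<in> B \<inter> D) \<in> W" using pick B(2,3) by blast
    ultimately show "Q \<inter> W \<noteq> {}" by blast
  qed
qed

lemma dense_set_if_approaches_dense_subset:
  fixes Z :: "'a::metric_space set"
  assumes "dense_set D" and Q: "\<And>W. open W \<Longrightarrow> W \<inter> D \<noteq> {} \<Longrightarrow> Q \<inter> W \<noteq> {}"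
    and approach: "\<And>c k. c \<in> Q \<Longrightarrow> \<exists>z\<in>Z. dist z c < inverse (real (Suc k))"
  shows "dense_set Z"
proof (rule ccontr)
  define W where "W = - closure Z"
  assume "\<not> dense_set Z"
  then have "W \<noteq> {}" unfolding W_def dense_set_def by auto
  then have "W \<inter> D \<noteq> {}"
    using open_Int_closure_eq_empty[of W D] assms(1) unfolding W_def dense_set_def by auto
  then obtain c where "c \<in> Q" "c \<in> W" using Q[of W] unfolding W_def by blast
  then obtain e where "e > 0" "ball c e \<subseteq> W"
    using open_contains_ball unfolding W_def by blast
  obtain k where "inverse (real (Suc k)) < e" using reals_Archimedean[OF \<open>e > 0\<close>] by blast
  then obtain z where "z \<in> Z" "z \<in> W"
    using approach[OF \<open>c \<in> Q\<close>, of k] \<open>ball c e \<subseteq> W\<close> by (force simp: dist_commute)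
  then show False using closure_subset unfolding W_def by blast
qed

lemma time_maps_preserve_dense_orbits:
  fixes \<Phi> :: "real \<Rightarrow> 'a::{metric_space, second_countable_topology} \<Rightarrow> 'a"
  assumes "is_flow \<Phi>" "bounded_generator \<Phi>"
    and recurrent: "\<And>c. dense_set (flow_orbit \<Phi> c) \<Longrightarrow> recurrent \<Phi> c"
  shows "\<exists>E. meagre E \<and>
    (\<forall>t x. t \<notin> E \<longrightarrow> dense_set (flow_orbit \<Phi> x) \<longrightarrow> dense_set (z_orbit (\<Phi> t) x))"
proof -
  obtain C where C: "C > 0" "\<And>a b z. dist (\<Phi> a z) (\<Phi> b z) \<le> C * \<bar>a - b\<bar>"
    using bounded_generator_time_lipschitz[OF assms(1,2)] by blast
  define D where "D = {c. dense_set (flow_orbit \<Phi> c)}"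
  obtain Q where Q: "countable Q" "Q \<subseteq> D" "\<And>W. open W \<Longrightarrow> W \<inter> D \<noteq> {} \<Longrightarrow> Q \<inter> W \<noteq> {}"
    using separable_subset by blast
  define \<rho> :: "nat \<Rightarrow> real" where "\<rho> k = inverse (real (Suc k))" for k
  define G where "G c k = net_steps {s. dist (\<Phi> s c) c < \<rho> k / 4} (\<rho> k / (8 * C))" for c k
  define E where "E = (\<Union>(c, k)\<in>Q \<times> UNIV. - G c k)"
  have "meagre E"
    unfolding E_def
  proof (rule meagre_countable_Union)
    show "countable ((\<lambda>(c, k). - G c k) ` (Q \<times> UNIV))" using Q(1) by simp
    fix S assume "S \<in> (\<lambda>(c, k). - G c k) ` (Q \<times> UNIV)"
    then obtain c k where "c \<in> D" and S: "S = - G c k" using Q(2) by auto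
    have "\<rho> k > 0" unfolding \<rho>_def by simp
    then have "\<rho> k / 4 > 0" by simp
    moreover have "recurrent \<Phi> c" using recurrent \<open>c \<in> D\<close> unfolding D_def by simp
    ultimately have "\<not> bounded {s. dist (\<Phi> s c) c < \<rho> k / 4}"
      unfolding recurrent_def by blast
    moreover have "\<rho> k / (8 * C) > 0" using \<open>\<rho> k > 0\<close> C(1) by simp
    ultimately show "nowhere_dense S"
      unfolding S G_def using nowhere_dense_compl_net_steps by blast
  qed
  moreover have "dense_set (z_orbit (\<Phi> t) x)" if "t \<notin> E" "x \<in> D" for t x
  proof (rule dense_set_if_approaches_dense_subset[of D Q])
    have "flow_orbit \<Phi> x \<subseteq> D"
      using \<open>x \<in> D\<close> unfolding D_def by (auto dest: flow_orbit_eq[OF assms(1)])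
    then show "dense_set D" using \<open>x \<in> D\<close> dense_set_mono unfolding D_def by blast
    fix c k assume "c \<in> Q"
    then have "t \<in> G c k" using \<open>t \<notin> E\<close> unfolding E_def by blast
    moreover have "dense_set (flow_orbit \<Phi> x)" "\<rho> k > 0"
      using \<open>x \<in> D\<close> unfolding D_def \<rho>_def by simp_all
    ultimately obtain m :: int where "dist (\<Phi> (of_int m * t) x) c < \<rho> k"
      using net_step_orbit_approaches[OF assms(1) C] unfolding G_def by blast
    moreover have "\<Phi> (of_int m * t) x \<in> z_orbit (\<Phi> t) x"
      unfolding z_orbit_def by (rule range_eqI[where x=m]) (simp add: flow_zpow[OF assms(1)])
    ultimately show "\<exists>z\<in>z_orbit (\<Phi> t) x. dist z c < inverse (real (Suc k))"
      unfolding \<rho>_def by blast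
  qed (use Q in blast)
  ultimately show ?thesis unfolding D_def by blast
qed

lemma Union_flow_orbits:
  assumes "is_flow \<Phi>"
  shows "\<Union>{flow_orbit \<Phi> x | x. P (dense_set (flow_orbit \<Phi> x))} =
           {y. P (dense_set (flow_orbit \<Phi> y))}"
proof (intro equalityI subsetI)
  fix y assume "y \<in> \<Union>{flow_orbit \<Phi> x | x. P (dense_set (flow_orbit \<Phi> x))}"
  then obtain x where x: "y \<in> flow_orbit \<Phi> x" "P (dense_set (flow_orbit \<Phi> x))" by blast
  then show "y \<in> {y. P (dense_set (flow_orbit \<Phi> y))}" using flow_orbit_eq[OF assms x(1)] by simp
next
  fix y assume "y \<in> {y. P (dense_set (flow_orbit \<Phi> y))}"
  then show "y \<in> \<Union>{flow_orbit \<Phi> x | x. P (dense_set (flow_orbit \<Phi> x))}"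
    using flow_orbit_self[OF assms, of y] by blast
qed

lemma Union_time_map_orbits:
  assumes "is_flow \<Phi>"
  shows "\<Union>{z_orbit (\<Phi> t) x | x. P (dense_set (flow_orbit \<Phi> x))} =
           {y. P (dense_set (flow_orbit \<Phi> y))}"
proof (intro equalityI subsetI)
  fix y assume "y \<in> \<Union>{z_orbit (\<Phi> t) x | x. P (dense_set (flow_orbit \<Phi> x))}"
  then obtain x where x: "y \<in> flow_orbit \<Phi> x" "P (dense_set (flow_orbit \<Phi> x))"
    using z_orbit_subset_flow_orbit[OF assms] by blast
  then show "y \<in> {y. P (dense_set (flow_orbit \<Phi> y))}" using flow_orbit_eq[OF assms x(1)] by simp
next
  fix y assume "y \<in> {y. P (dense_set (flow_orbit \<Phi> y))}"
  then show "y \<in> \<Union>{z_orbit (\<Phi> t) x | x. P (dense_set (flow_orbit \<Phi> x))}"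
    using z_orbit_self[of y "\<Phi> t"] by blast
qed

lemma time_map_orbit_sets:
  assumes "is_flow \<Phi>" "\<And>x. dense_set (flow_orbit \<Phi> x) \<Longrightarrow> dense_set (z_orbit (\<Phi> t) x)"
  shows "\<Union>{z_orbit (\<Phi> t) x | x. dense_set (z_orbit (\<Phi> t) x)} =
           \<Union>{flow_orbit \<Phi> x | x. dense_set (flow_orbit \<Phi> x)}"
    and "homeo_exceptional_set (\<Phi> t) = flow_exceptional_set \<Phi>"
proof -
  have "dense_set (z_orbit (\<Phi> t) x) \<longleftrightarrow> dense_set (flow_orbit \<Phi> x)" for x
    using assms(2) dense_set_mono z_orbit_subset_flow_orbit[OF assms(1)] by blast
  then show
    "\<Union>{z_orbit (\<Phi> t) x | x. dense_set (z_orbit (\<Phi> t) x)} =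
       \<Union>{flow_orbit \<Phi> x | x. dense_set (flow_orbit \<Phi> x)}"
    "homeo_exceptional_set (\<Phi> t) = flow_exceptional_set \<Phi>"
    unfolding homeo_exceptional_set_def flow_exceptional_set_def
    using Union_flow_orbits[OF assms(1), where P=id] Union_flow_orbits[OF assms(1), where P=Not]
      Union_time_map_orbits[OF assms(1), where P=id] Union_time_map_orbits[OF assms(1), where P=Not]
    by simp_all
qed

theorem corollary2p4:
  fixes A :: "('a::{metric_space, second_countable_topology} set \<times> ('a \<Rightarrow> real^'n)) set"
    and \<Phi> :: "real \<Rightarrow> 'a \<Rightarrow> 'a"
    and r :: nat
  assumes "CARD('n) > 1"
    and "r > 0"
    and "Cr_atlas r A"
    and "Cr_flow r A \<Phi>"
    and "flow_quasi_minimal \<Phi>"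
    and "bounded_generator \<Phi>"
  shows "\<exists>E :: real set. meagre E \<and>
           (\<forall>t. t \<notin> E \<longrightarrow>
              homeo_quasi_minimal (\<Phi> t) \<and>
              homeo_exceptional_set (\<Phi> t) = flow_exceptional_set \<Phi>)"
proof -
  have flow: "is_flow \<Phi>" using assms(4) unfolding Cr_flow_def by blast
  obtain E where "meagre E" and dense:
    "\<And>t x. t \<notin> E \<Longrightarrow> dense_set (flow_orbit \<Phi> x) \<Longrightarrow> dense_set (z_orbit (\<Phi> t) x)"
    using time_maps_preserve_dense_orbits[OF flow assms(6)]
      manifold_dense_orbit_recurrent[OF assms(1,3) flow] by blast
  have "homeo_quasi_minimal (\<Phi> t) \<and> homeo_exceptional_set (\<Phi> t) = flow_exceptional_set \<Phi>"
    if "t \<notin> E" for t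
    using time_map_orbit_sets[OF flow dense[OF that]] assms(5)
    unfolding homeo_quasi_minimal_def flow_quasi_minimal_def by simp
  then show ?thesis using \<open>meagre E\<close> by blast
qed

end
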